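(* Let $Y,Z$ be finite-dimensional real or complex vector spaces, let $F\colon Y\to Z$ be quadratic, let $\mathcal A\subset L(Y,Y)$ be a Jordan operator algebra on $Y$, let $\alpha\colon Z\to\mathcal A$, and let $\beta\colon\mathcal A\to L(Z,Z)$ satisfy $F'(y)Ty=\beta(T)F(y)$ for all $y\in Y$, $T\in\mathcal A$. Let nonzero $b_1,\dots,b_s$ and $h>0$ be given and suppose $y_0,y_1,Y_1,\dots,Y_s\in Y$ satisfy the SyDIRK equations for $f(y)=\alpha(F(y))y$: \[ Y_i = y_0 + h\sum_{j=1}^{i-1} b_j f(Y_j) + \frac h2 b_i f(Y_i),\qquad y_1 = y_0 + h\sum_{i=1}^s b_i f(Y_i). \] Then $z_0=F(y_0)$, $Z_i=F(Y_i)$, $z_1=F(y_1)$ satisfy \[ Z_i = z_0 + h\sum_{j=1}^{i-1} b_j\beta(\alpha(Z_j))Z_j + \frac h2 b_i\beta(\alpha(Z_i))Z_i - \frac{h^2}{8}b_i^2\bigl[\beta(\alpha(Z_i))^2-\beta(\alpha(Z_i)^2)\bigr]Z_i, \] \[ z_1 = z_0 + h\sum_{i=1}^s b_i\beta(\alpha(Z_i))Z_i . \]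
   Context: $F$ quadratic means that for every $y_0$, $F(y)=F(y_0)+F'(y_0)(y-y_0)+\tfrac12F''(y-y_0,y-y_0)$ with $F''$ a constant symmetric bilinear map. A Jordan operator algebra on $Y$ is a linear subspace of $L(Y,Y)$ closed under $S\bullet T=\tfrac12(ST+TS)$. *)

theory Defs
  imports "HOL-Analysis.Analysis"
begin

text \<open>Finite-dimensional spaces Y, Z over the scalar field 'k are modelled as
coordinate spaces 'k^'n and 'k^'m; linear maps are matrices ('k^'n^'m is L(Y,Z)),
composition is (**), application is (*v).  'k :: real_normed_field means
'k is (isomorphic to) the real or the complex numbers.\<close>

definition mscale :: "'k::times \<Rightarrow> 'k^'n^'m \<Rightarrow> 'k^'n^'m" where
  "mscale c M = (\<chi> i j. c * M $ i $ j)"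

definition symmetric_bilinear :: "('k::field^'n \<Rightarrow> 'k^'n \<Rightarrow> 'k^'m) \<Rightarrow> bool" where
  "symmetric_bilinear B \<longleftrightarrow>
     (\<forall>x y. B x y = B y x) \<and>
     (\<forall>x y z. B (x + y) z = B x z + B y z) \<and>
     (\<forall>c x z. B (c *s x) z = c *s B x z)"

definition quadratic_map ::
  "('k::field^'n \<Rightarrow> 'k^'m) \<Rightarrow> ('k^'n \<Rightarrow> 'k^'n^'m) \<Rightarrow> ('k^'n \<Rightarrow> 'k^'n \<Rightarrow> 'k^'m) \<Rightarrow> bool" where
  "quadratic_map F F' F'' \<longleftrightarrow>
     symmetric_bilinear F'' \<and>
     (\<forall>y0 y. F y = F y0 + F' y0 *v (y - y0) + (1/2) *s F'' (y - y0) (y - y0))"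

definition jordan_product :: "'k::field^'n^'n \<Rightarrow> 'k^'n^'n \<Rightarrow> 'k^'n^'n" where
  "jordan_product S T = mscale (1/2) (S ** T + T ** S)"

definition jordan_operator_algebra :: "('k::field^'n^'n) set \<Rightarrow> bool" where
  "jordan_operator_algebra A \<longleftrightarrow>
     0 \<in> A \<and> (\<forall>S\<in>A. \<forall>T\<in>A. S + T \<in> A) \<and> (\<forall>c. \<forall>T\<in>A. mscale c T \<in> A) \<and>
     (\<forall>S\<in>A. \<forall>T\<in>A. jordan_product S T \<in> A)"

end

theory Submission
  imports Defs
begin

(* Put W_i = y0 + h sum_{j<i} b_j f(Y_j) and v_i = (h/2) b_i T_i Y_i with T_i = alpha(F(Y_i)) in A.
   Then Y_i = W_i + v_i and W_(i+1) = Y_i + v_i: every stage is an implicit midpoint step with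
   midpoint Y_i.  For quadratic F the central difference F(Y + v) - F(Y - v) = 2 F'(Y) v is exact,
   and F'(Y) T_i Y = beta(T_i) F(Y), so F(W_i) advances exactly like the DIRK partial sums of z;
   telescoping gives z_1.  The stage value F(Y_i) = F(W_i + v_i) picks up the extra term
   -F''(v_i, v_i)/2, and differentiating F'(y) T y = beta(T) F(y) once more in y gives
   F''(T y, T y) = (beta(T)^2 - beta(T^2)) F(y); T^2 is the Jordan square of T, so it lies in A. *)

context
  fixes B :: "'k::field^'n \<Rightarrow> 'k^'n \<Rightarrow> 'k^'m"
  assumes bilinear: "symmetric_bilinear B"
begin

lemma symmetric_bilinear_commute: "B x y = B y x"
  using bilinear unfolding symmetric_bilinear_def by blast

lemma symmetric_bilinear_add_left: "B (x + y) z = B x z + B y z"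
  using bilinear unfolding symmetric_bilinear_def by blast

lemma symmetric_bilinear_add_right: "B z (x + y) = B z x + B z y"
  using symmetric_bilinear_add_left symmetric_bilinear_commute by metis

lemma symmetric_bilinear_scale_left: "B (c *s x) z = c *s B x z"
  using bilinear unfolding symmetric_bilinear_def by blast

lemma symmetric_bilinear_scale_right: "B z (c *s x) = c *s B z x"
  using symmetric_bilinear_scale_left symmetric_bilinear_commute by metis

lemma symmetric_bilinear_minus_left: "B (- x) z = - B x z"
  using symmetric_bilinear_scale_left[of "-1" x z] by (simp add: vector_sneg_minus1[symmetric])

lemma symmetric_bilinear_minus_right: "B z (- x) = - B z x"
  using symmetric_bilinear_minus_left symmetric_bilinear_commute by metis

end

lemma jordan_operator_algebra_square:
  fixes T :: "'k::field_char_0^'n^'n"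
  assumes "jordan_operator_algebra A" "T \<in> A"
  shows "T ** T \<in> A"
proof -
  have "jordan_product T T = T ** T"
    by (simp add: jordan_product_def mscale_def vec_eq_iff field_simps)
  then show ?thesis
    using assms unfolding jordan_operator_algebra_def by metis
qed

context
  fixes F :: "'k::field_char_0^'n \<Rightarrow> 'k^'m"
    and F' :: "'k^'n \<Rightarrow> 'k^'n^'m"
    and F'' :: "'k^'n \<Rightarrow> 'k^'n \<Rightarrow> 'k^'m"
  assumes quad: "quadratic_map F F' F''"
begin

lemma quadratic_map_bilinear: "symmetric_bilinear F''"
  using quad unfolding quadratic_map_def by blast

lemma quadratic_map_expand: "F (y + v) = F y + F' y *v v + (1/2) *s F'' v v"
  using quad unfolding quadratic_map_def by (metis add_diff_cancel_left')

lemma quadratic_map_expand_minus: "F (y - v) = F y - F' y *v v + (1/2) *s F'' v v"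
  using quadratic_map_expand[of y "- v"] quadratic_map_bilinear
  by (simp add: vec.neg symmetric_bilinear_minus_left symmetric_bilinear_minus_right)

lemma quadratic_map_derivative_affine: "F' (y + w) *v u = F' y *v u + F'' w u"
proof -
  have "F (y + w + u) = F y + F' y *v (w + u) + (1/2) *s F'' (w + u) (w + u)"
    using quadratic_map_expand[of y "w + u"] by (simp add: add.assoc)
  moreover have
    "F (y + w + u) = F y + F' y *v w + (1/2) *s F'' w w + F' (y + w) *v u + (1/2) *s F'' u u"
    using quadratic_map_expand[of "y + w" u] quadratic_map_expand[of y w] by simp
  moreover have "F'' (w + u) (w + u) = F'' w w + 2 *s F'' w u + F'' u u"
    using quadratic_map_bilinear
    by (simp add: symmetric_bilinear_add_left symmetric_bilinear_add_right
        symmetric_bilinear_commute[of F'' u w] vec_eq_iff algebra_simps)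
  ultimately show ?thesis
    by (simp add: vec.add vector_add_ldistrib vector_smult_assoc algebra_simps)
qed

lemma quadratic_map_invariance_linearized:
  assumes inv: "\<And>y. F' y *v (T *v y) = B *v F y"
  shows "F' y *v (T *v w) + F'' w (T *v y) = B *v (F' y *v w)"
proof -
  define L where "L w = F' y *v (T *v w) + F'' w (T *v y) - B *v (F' y *v w)" for w
  define Q where "Q w = F'' w (T *v w) - (1/2) *s (B *v F'' w w)" for w
  have LQ: "L w + Q w = 0" for w
  proof -
    have "F' y *v (T *v y) + F'' w (T *v y) + (F' y *v (T *v w) + F'' w (T *v w))
        = F' (y + w) *v (T *v (y + w))"
      by (simp only: quadratic_map_derivative_affine vec.add)
    also have "\<dots> = B *v F (y + w)"
      by (rule inv)
    also have "\<dots> = B *v F y + B *v (F' y *v w) + (1/2) *s (B *v F'' w w)"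
      by (simp only: quadratic_map_expand vec.add vec.scale)
    finally show ?thesis
      using inv[of y] unfolding L_def Q_def by (simp add: algebra_simps)
  qed
  \<comment> \<open>L is odd and Q is even in w, and L + Q vanishes identically, so L vanishes.\<close>
  have odd: "L (- w) = - L w" and even: "Q (- w) = Q w"
    using quadratic_map_bilinear
    by (simp_all add: L_def Q_def vec.neg
        symmetric_bilinear_minus_left symmetric_bilinear_minus_right)
  have "L w + L w = (L w + Q w) - (L (- w) + Q (- w))"
    unfolding odd even by simp
  also have "\<dots> = 0"
    using LQ by simp
  finally have "L w = 0"
    by (simp add: vec_eq_iff)
  then show ?thesis
    by (simp add: L_def)
qed

lemma quadratic_map_invariance_second_derivative:
  assumes inv: "\<And>y. F' y *v (T *v y) = B *v F y"
    and inv_square: "\<And>y. F' y *v ((T ** T) *v y) = B2 *v F y"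
  shows "F'' (T *v y) (T *v y) = (B ** B - B2) *v F y"
proof -
  have "F' y *v (T *v (T *v y)) + F'' (T *v y) (T *v y) = B *v (F' y *v (T *v y))"
    using quadratic_map_invariance_linearized[OF inv] .
  moreover have "F' y *v (T *v (T *v y)) = B2 *v F y"
    using inv_square[of y] by (simp add: matrix_vector_mul_assoc)
  moreover have "B *v (F' y *v (T *v y)) = (B ** B) *v F y"
    using inv[of y] by (simp add: matrix_vector_mul_assoc)
  ultimately show ?thesis
    by (simp add: matrix_vector_mult_diff_rdistrib algebra_simps)
qed

lemma quadratic_map_midpoint_step:
  assumes inv: "\<And>y. F' y *v (T *v y) = B *v F y"
    and stage: "Y = W + c *s (T *v Y)"
    and step: "W' = Y + c *s (T *v Y)"
  shows "F W' = F W + (2 * c) *s (B *v F Y)"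
proof -
  define v where "v = c *s (T *v Y)"
  have "W = Y - v"
    using stage[folded v_def] by simp
  then have "F W' - F W = F (Y + v) - F (Y - v)"
    using step[folded v_def] by simp
  also have "\<dots> = 2 *s (F' Y *v v)"
    by (simp add: quadratic_map_expand quadratic_map_expand_minus vec_eq_iff)
  also have "\<dots> = (2 * c) *s (B *v F Y)"
    using inv[of Y] by (simp add: v_def vec.scale vector_smult_assoc)
  finally show ?thesis
    by (simp add: algebra_simps)
qed

lemma quadratic_map_midpoint_stage:
  assumes inv: "\<And>y. F' y *v (T *v y) = B *v F y"
    and inv_square: "\<And>y. F' y *v ((T ** T) *v y) = B2 *v F y"
    and stage: "Y = W + c *s (T *v Y)"
  shows "F Y = F W + c *s (B *v F Y) - (c^2 / 2) *s ((B ** B - B2) *v F Y)"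
proof -
  define v where "v = c *s (T *v Y)"
  have "W = Y - v"
    using stage[folded v_def] by simp
  then have "F W = F Y - F' Y *v v + (1/2) *s F'' v v"
    by (simp add: quadratic_map_expand_minus)
  moreover have "F' Y *v v = c *s (B *v F Y)"
    using inv[of Y] by (simp add: v_def vec.scale)
  moreover have "F'' v v = c^2 *s ((B ** B - B2) *v F Y)"
    using quadratic_map_bilinear quadratic_map_invariance_second_derivative[OF inv inv_square]
    by (simp add: v_def symmetric_bilinear_scale_left symmetric_bilinear_scale_right
        vector_smult_assoc power2_eq_square)
  ultimately show ?thesis
    by (simp add: vector_smult_assoc)
qed

end

lemma sum_atLeastLessThan_telescope:
  fixes G :: "nat \<Rightarrow> 'a::ab_group_add"
  assumes "m \<le> n" and "\<And>i. m \<le> i \<Longrightarrow> i < n \<Longrightarrow> G (Suc i) = G i + d i"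
  shows "G n = G m + (\<Sum>i\<in>{m..<n}. d i)"
proof -
  have "(\<Sum>i\<in>{m..<n}. d i) = (\<Sum>i\<in>{m..<n}. G (Suc i) - G i)"
    using assms(2) by (intro sum.cong) auto
  also have "\<dots> = G n - G m"
    by (rule sum_Suc_diff'[OF assms(1)])
  finally show ?thesis
    by simp
qed

definition dirk_partial_sum ::
  "'k::real_normed_field^'n \<Rightarrow> real \<Rightarrow> (nat \<Rightarrow> real) \<Rightarrow> (nat \<Rightarrow> 'k^'n) \<Rightarrow> nat \<Rightarrow> 'k^'n"
  where
  "dirk_partial_sum y0 h b g i = y0 + of_real h *s (\<Sum>j\<in>{1..<i}. of_real (b j) *s g j)"

lemma dirk_partial_sum_Suc:
  "1 \<le> i \<Longrightarrow>
    dirk_partial_sum y0 h b g (Suc i) = dirk_partial_sum y0 h b g i + of_real h *s (of_real (b i) *s g i)"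
  by (simp add: dirk_partial_sum_def vector_add_ldistrib add.assoc)

lemma of_real_half_mult_double:
  "2 * (of_real (h / 2 * b) :: 'k::real_normed_field) = of_real h * of_real b"
proof -
  have "2 * (h / 2 * b) = h * b"
    by simp
  then show ?thesis
    by (metis of_real_mult of_real_numeral)
qed

lemma of_real_half_mult_square:
  "(of_real (h / 2 * b) :: 'k::real_normed_field)^2 / 2 = of_real (h^2 / 8 * b^2)"
proof -
  have "(h / 2 * b)^2 / 2 = h^2 / 8 * b^2"
    by (simp add: power2_eq_square)
  then show ?thesis
    by (metis of_real_power of_real_divide of_real_numeral)
qed

lemma sydirk_stage_reflection:
  assumes "1 \<le> i" and "Y = dirk_partial_sum y0 h b g i + of_real (h / 2 * b i) *s g i"
  shows "dirk_partial_sum y0 h b g (Suc i) = Y + of_real (h / 2 * b i) *s g i"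
proof -
  have "of_real h *s (of_real (b i) *s g i)
      = of_real (h / 2 * b i) *s g i + of_real (h / 2 * b i) *s g i"
    by (simp only: vector_smult_assoc of_real_half_mult_double[symmetric] mult_2
        vec.scale_left_distrib)
  then show ?thesis
    using assms by (simp add: dirk_partial_sum_Suc add.assoc)
qed

lemma quadratic_map_sydirk_partial_sum:
  fixes F :: "'k::real_normed_field^'n \<Rightarrow> 'k^'m"
  assumes quad: "quadratic_map F F' F''"
    and inv: "\<And>i y. F' y *v (T i *v y) = B i *v F y"
    and stages: "\<And>i. i \<in> {1..s} \<Longrightarrow>
      Ys i = dirk_partial_sum y0 h b (\<lambda>j. T j *v Ys j) i + of_real (h / 2 * b i) *s (T i *v Ys i)"
    and "1 \<le> n" "n \<le> Suc s"
  shows "F (dirk_partial_sum y0 h b (\<lambda>j. T j *v Ys j) n)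
    = dirk_partial_sum (F y0) h b (\<lambda>j. B j *v F (Ys j)) n"
proof -
  let ?W = "dirk_partial_sum y0 h b (\<lambda>j. T j *v Ys j)"
  have "F (?W (Suc i)) = F (?W i) + of_real h *s (of_real (b i) *s (B i *v F (Ys i)))"
    if "1 \<le> i" "i < n" for i
  proof -
    have i: "i \<in> {1..s}"
      using that \<open>n \<le> Suc s\<close> by auto
    have "?W (Suc i) = Ys i + of_real (h / 2 * b i) *s (T i *v Ys i)"
      using sydirk_stage_reflection[where g="\<lambda>j. T j *v Ys j", OF _ stages[OF i]] that(1)
      by simp
    from quadratic_map_midpoint_step[OF quad inv stages[OF i] this]
    show ?thesis
      by (simp only: of_real_half_mult_double vector_smult_assoc)
  qed
  then have
    "F (?W n) = F (?W 1) + (\<Sum>i\<in>{1..<n}. of_real h *s (of_real (b i) *s (B i *v F (Ys i))))"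
    by (rule sum_atLeastLessThan_telescope[OF \<open>1 \<le> n\<close>])
  then show ?thesis
    by (simp add: dirk_partial_sum_def vec.scale_sum_right)
qed

lemma quadratic_map_sydirk_stage:
  fixes F :: "'k::real_normed_field^'n \<Rightarrow> 'k^'m"
  assumes quad: "quadratic_map F F' F''"
    and inv: "\<And>i y. F' y *v (T i *v y) = B i *v F y"
    and inv_square: "\<And>i y. F' y *v ((T i ** T i) *v y) = B2 i *v F y"
    and stages: "\<And>i. i \<in> {1..s} \<Longrightarrow>
      Ys i = dirk_partial_sum y0 h b (\<lambda>j. T j *v Ys j) i + of_real (h / 2 * b i) *s (T i *v Ys i)"
    and i: "i \<in> {1..s}"
  shows "F (Ys i) = dirk_partial_sum (F y0) h b (\<lambda>j. B j *v F (Ys j)) i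
    + of_real (h / 2 * b i) *s (B i *v F (Ys i))
    - of_real (h^2 / 8 * (b i)^2) *s ((B i ** B i - B2 i) *v F (Ys i))"
proof -
  have "F (dirk_partial_sum y0 h b (\<lambda>j. T j *v Ys j) i)
      = dirk_partial_sum (F y0) h b (\<lambda>j. B j *v F (Ys j)) i"
    using i by (intro quadratic_map_sydirk_partial_sum[OF quad inv stages]) auto
  then show ?thesis
    using quadratic_map_midpoint_stage[OF quad inv inv_square stages[OF i]]
    unfolding of_real_half_mult_square by simp
qed

theorem corollary3p3:
  fixes F :: "'k::real_normed_field^'n \<Rightarrow> 'k^'m"
    and F' :: "'k^'n \<Rightarrow> 'k^'n^'m"
    and F'' :: "'k^'n \<Rightarrow> 'k^'n \<Rightarrow> 'k^'m"
    and A :: "('k^'n^'n) set"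
    and \<alpha> :: "'k^'m \<Rightarrow> 'k^'n^'n"
    and \<beta> :: "'k^'n^'n \<Rightarrow> 'k^'m^'m"
    and b :: "nat \<Rightarrow> real" and s :: nat and h :: real
    and y0 y1 :: "'k^'n" and Ys :: "nat \<Rightarrow> 'k^'n"
    and f :: "'k^'n \<Rightarrow> 'k^'n"
  assumes quad: "quadratic_map F F' F''"
    and jordan: "jordan_operator_algebra A"
    and alpha: "\<And>z. \<alpha> z \<in> A"
    and beta: "\<And>y T. T \<in> A \<Longrightarrow> F' y *v (T *v y) = \<beta> T *v F y"
    and b_nz: "\<And>i. i \<in> {1..s} \<Longrightarrow> b i \<noteq> 0"
    and h_pos: "h > 0"
    and f_def: "\<And>y. f y = \<alpha> (F y) *v y"
    and stages: "\<And>i. i \<in> {1..s} \<Longrightarrow>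
       Ys i = y0 + of_real h *s (\<Sum>j\<in>{1..<i}. of_real (b j) *s f (Ys j))
                 + of_real (h / 2 * b i) *s f (Ys i)"
    and step: "y1 = y0 + of_real h *s (\<Sum>i\<in>{1..s}. of_real (b i) *s f (Ys i))"
  shows "(\<forall>i\<in>{1..s}.
            F (Ys i) = F y0
              + of_real h *s (\<Sum>j\<in>{1..<i}. of_real (b j) *s (\<beta> (\<alpha> (F (Ys j))) *v F (Ys j)))
              + of_real (h / 2 * b i) *s (\<beta> (\<alpha> (F (Ys i))) *v F (Ys i))
              - of_real (h^2 / 8 * (b i)^2) *s
                  ((\<beta> (\<alpha> (F (Ys i))) ** \<beta> (\<alpha> (F (Ys i)))
                    - \<beta> (\<alpha> (F (Ys i)) ** \<alpha> (F (Ys i)))) *v F (Ys i)))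
       \<and> F y1 = F y0 + of_real h *s (\<Sum>i\<in>{1..s}. of_real (b i) *s (\<beta> (\<alpha> (F (Ys i))) *v F (Ys i)))"
proof -
  define T where "T i = \<alpha> (F (Ys i))" for i
  have inv: "F' y *v (T i *v y) = \<beta> (T i) *v F y"
    and inv_square: "F' y *v ((T i ** T i) *v y) = \<beta> (T i ** T i) *v F y" for i y
    using beta alpha jordan_operator_algebra_square[OF jordan alpha] by (simp_all add: T_def)
  have stages_T:
    "Ys i = dirk_partial_sum y0 h b (\<lambda>j. T j *v Ys j) i + of_real (h / 2 * b i) *s (T i *v Ys i)"
    if "i \<in> {1..s}" for i
    using stages[OF that] unfolding dirk_partial_sum_def T_def f_def .
  have "F y1 = F (dirk_partial_sum y0 h b (\<lambda>j. T j *v Ys j) (Suc s))"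
    by (simp add: step dirk_partial_sum_def T_def f_def atLeastLessThanSuc_atLeastAtMost)
  also have "\<dots> = dirk_partial_sum (F y0) h b (\<lambda>j. \<beta> (T j) *v F (Ys j)) (Suc s)"
    by (rule quadratic_map_sydirk_partial_sum[OF quad inv stages_T]) auto
  finally show ?thesis
    using quadratic_map_sydirk_stage[OF quad inv inv_square stages_T]
    unfolding dirk_partial_sum_def T_def atLeastLessThanSuc_atLeastAtMost by blast
qed

end
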